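(* Let $G=(V,E)$ be an acyclic finite directed graph, $\Gamma\subset V$ containing all sinks and sources with $V\setminus\Gamma\ne\emptyset$, and let $z=(z_v)_{v\in\Gamma}$ with each $z_v$ a positive multiple of $I_d$. Then $\Phi_d$ restricted to $\mathcal P_d^V(z)$ has a unique global minimiser $m$, at which the Hessian (with respect to the independent real entries of $x_v$, $v\in V\setminus\Gamma$) is positive definite; moreover every $m_v$ is a positive multiple of $I_d$.
   Context: $v\to w$ denotes an edge; sinks have no outgoing edges, sources no incoming edges. $\mathcal P_d$: $d\times d$ real symmetric positive definite matrices. $\mathcal P_d^V(z)=\{x=(x_v)_{v\in V}\in\mathcal P_d^V:x_v=z_v\ \forall v\in\Gamma\}$. $\Phi_d(x)=\sum_{v\to w}\operatorname{tr}[x_vx_w^{-1}]$. *)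

theory Defs
  imports "HOL-Analysis.Analysis"
begin

text \<open>Symmetric positive definite real d x d matrices (d = CARD('n)).\<close>
definition spd :: "real^'n^'n \<Rightarrow> bool" where
  "spd A \<longleftrightarrow> transpose A = A \<and> (\<forall>x. x \<noteq> 0 \<longrightarrow> x \<bullet> (A *v x) > 0)"

definition symm :: "real^'n^'n \<Rightarrow> bool" where
  "symm A \<longleftrightarrow> transpose A = A"

text \<open>Finite directed graph (V,E) with E a set of ordered pairs (v,w), meaning v -> w.\<close>
definition sinks :: "'v set \<Rightarrow> ('v \<times> 'v) set \<Rightarrow> 'v set" where
  "sinks V E = {v \<in> V. \<not> (\<exists>w. (v, w) \<in> E)}"

definition sources :: "'v set \<Rightarrow> ('v \<times> 'v) set \<Rightarrow> 'v set" where
  "sources V E = {v \<in> V. \<not> (\<exists>u. (u, v) \<in> E)}"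

definition Phi :: "('v \<times> 'v) set \<Rightarrow> ('v \<Rightarrow> real^'n^'n) \<Rightarrow> real" where
  "Phi E x = (\<Sum>(v, w)\<in>E. trace (x v ** matrix_inv (x w)))"

text \<open>P_d^V(z): families of SPD matrices indexed by V agreeing with z on Gamma
  (values outside V are irrelevant and fixed to 0).\<close>
definition PdV :: "'v set \<Rightarrow> 'v set \<Rightarrow> ('v \<Rightarrow> real^'n^'n) \<Rightarrow> ('v \<Rightarrow> real^'n^'n) set" where
  "PdV V \<Gamma> z = {x. (\<forall>v\<in>V. spd (x v)) \<and> (\<forall>v\<in>\<Gamma>. x v = z v) \<and> (\<forall>v. v \<notin> V \<longrightarrow> x v = 0)}"

text \<open>q is the second derivative at t = 0 of t \<mapsto> f(m + t H), i.e. the value of the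
  Hessian quadratic form of f at m in direction H.\<close>
definition second_dir_deriv ::
  "(('v \<Rightarrow> real^'n^'n) \<Rightarrow> real) \<Rightarrow> ('v \<Rightarrow> real^'n^'n) \<Rightarrow> ('v \<Rightarrow> real^'n^'n) \<Rightarrow> real \<Rightarrow> bool" where
  "second_dir_deriv f m H q \<longleftrightarrow>
     (\<forall>\<^sub>F t in nhds 0. (\<lambda>s. f (\<lambda>v. m v + s *\<^sub>R H v)) differentiable (at t)) \<and>
     ((\<lambda>t. deriv (\<lambda>s. f (\<lambda>v. m v + s *\<^sub>R H v)) t) has_real_derivative q) (at 0)"

end

theory Submission
  imports Defs
begin

text \<open>
  Write $m_v = c_v I$ for positive scalars $c$ and $A_v = x_v / c_v$. The inequality
  $\ln\det A - \ln\det B \le \operatorname{tr}(A B^{-1}) - d$, with equality only for $A = B$, gives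
  $\Phi(x) - \Phi(m) = \sum_{v \to w} (c_v/c_w)\,[\operatorname{tr}(A_v A_w^{-1}) - d
  - (\ln\det A_v - \ln\det A_w)] \ge 0$ as soon as the logarithmic terms telescope away, that is,
  as soon as $c$ is balanced: $\sum_{v \to w} c_v/c_w = \sum_{u \to v} c_u/c_v$ at every interior
  vertex $v$. Balanced weights are the critical points of the scalar problem of minimising
  $\sum_{v \to w} c_v/c_w$ with the boundary values fixed; a minimiser exists because a bound on
  this sum bounds every edge ratio, and acyclicity propagates the boundary values to two-sided
  bounds on all weights. Equality forces $A$ to be constant along edges, hence $A = I$. The same
  telescoping turns the Hessian in direction $H$ into
  $\sum_{v \to w} (c_v/c_w) \operatorname{tr}((H_v/c_v - H_w/c_w)^2)$, which vanishes only for $H = 0$.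
\<close>

section \<open>Diagonal matrices and the spectral theorem\<close>

definition diag_mat :: "real^'n \<Rightarrow> real^'n^'n" where
  "diag_mat a = (\<chi> i j. if i = j then a$i else 0)"

lemma diag_mat_nth [simp]: "diag_mat a $ i $ j = (if i = j then a$i else 0)"
  by (simp add: diag_mat_def)

lemma transpose_diag_mat [simp]: "transpose (diag_mat a) = diag_mat a"
  by (simp add: vec_eq_iff transpose_def)

lemma matrix_mul_diag_mat_nth [simp]: "(A ** diag_mat a) $ i $ j = A$i$j * a$j"
  by (simp add: matrix_matrix_mult_def if_distrib if_distribR cong: if_cong)

lemma diag_mat_mult_vec: "diag_mat a *v y = (\<chi> i. a$i * y$i)"
  by (simp add: vec_eq_iff matrix_vector_mult_def if_distrib if_distribR cong: if_cong)

lemma diag_mat_mul_diag_mat: "diag_mat a ** diag_mat b = diag_mat (\<chi> i. a$i * b$i)"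
  by (simp add: vec_eq_iff)

lemma diag_mat_add: "diag_mat a + diag_mat b = diag_mat (\<chi> i. a$i + b$i)"
  by (simp add: vec_eq_iff)

lemma scaleR_diag_mat: "k *\<^sub>R diag_mat a = diag_mat (\<chi> i. k * a$i)"
  by (simp add: vec_eq_iff)

lemma diag_mat_const: "diag_mat (\<chi> i. k) = k *\<^sub>R mat 1"
  by (simp add: vec_eq_iff mat_def)

lemma trace_diag_mat: "trace (diag_mat a) = (\<Sum>i\<in>UNIV. a$i)"
  by (simp add: trace_def)

lemma trace_mul_diag_mat: "trace (X ** diag_mat a) = (\<Sum>i\<in>UNIV. X$i$i * a$i)"
  by (simp add: trace_def)

lemma det_diag_mat: "det (diag_mat a) = (\<Prod>i\<in>UNIV. a$i)"
  by (subst det_diagonal) auto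

lemma matrix_add_rdistrib:
  fixes A B :: "'a::semiring_1^'n^'m" and C :: "'a^'p^'n" shows "(A + B) ** C = A ** C + B ** C"
  by (simp add: matrix_matrix_mult_def vec_eq_iff sum.distrib distrib_right)

lemma matrix_diff_rdistrib:
  fixes A B :: "'a::ring_1^'n^'m" and C :: "'a^'p^'n" shows "(A - B) ** C = A ** C - B ** C"
  by (simp add: matrix_matrix_mult_def vec_eq_iff sum_subtractf left_diff_distrib)

lemma matrix_diff_ldistrib:
  fixes A :: "'a::ring_1^'n^'m" and B C :: "'a^'p^'n" shows "A ** (B - C) = A ** B - A ** C"
  by (simp add: matrix_matrix_mult_def vec_eq_iff sum_subtractf right_diff_distrib)

lemma scaleR_matrix_mul_scaleR:
  fixes X Y :: "real^'n^'n" shows "(a *\<^sub>R X) ** (b *\<^sub>R Y) = (a * b) *\<^sub>R (X ** Y)"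
  by (simp add: matrix_scalar_ac scalar_matrix_assoc[symmetric])

lemma trace_scaleR: fixes X :: "real^'n^'n" shows "trace (k *\<^sub>R X) = k * trace X"
  by (simp add: trace_def sum_distrib_left)

lemma transpose_diff: fixes A B :: "'a::ring_1^'n^'m" shows "transpose (A - B) = transpose A - transpose B"
  by (simp add: transpose_def vec_eq_iff)

lemma matrix_inv_unique:
  fixes A X :: "real^'n^'n"
  assumes "A ** X = mat 1" "X ** A = mat 1"
  shows "matrix_inv A = X"
proof -
  have "\<exists>A'. A ** A' = mat 1 \<and> A' ** A = mat 1" using assms by blast
  then have Y: "A ** matrix_inv A = mat 1 \<and> matrix_inv A ** A = mat 1"
    unfolding matrix_inv_def by (rule someI_ex)
  have "matrix_inv A = matrix_inv A ** (A ** X)" using assms by simp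
  also have "\<dots> = (matrix_inv A ** A) ** X" by (simp add: matrix_mul_assoc)
  also have "\<dots> = X" using Y by simp
  finally show ?thesis .
qed

lemma symmetric_inner_commute:
  fixes A :: "real^'n^'n"
  assumes "transpose A = A"
  shows "x \<bullet> (A *v y) = (A *v x) \<bullet> y"
proof -
  have "x \<bullet> (A *v y) = (x v* A) \<bullet> y" by (simp add: dot_lmul_matrix)
  also have "x v* A = transpose A *v x" by simp
  finally show ?thesis using assms by simp
qed

lemma orthogonal_matrix_mul_transpose:
  "orthogonal_matrix Q \<Longrightarrow> transpose Q ** Q = mat 1"
  "orthogonal_matrix Q \<Longrightarrow> Q ** transpose Q = mat 1"
  by (simp_all add: orthogonal_matrix_def)

lemma inner_orthogonal_matrix_mult_vec:
  fixes Q :: "real^'n^'n"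
  assumes "orthogonal_matrix Q"
  shows "(Q *v y) \<bullet> (Q *v z) = y \<bullet> z"
proof -
  have "(Q *v y) \<bullet> (Q *v z) = ((Q *v y) v* Q) \<bullet> z" by (simp add: dot_lmul_matrix)
  also have "(Q *v y) v* Q = (transpose Q ** Q) *v y"
    by (metis matrix_vector_mul_assoc transpose_matrix_vector)
  finally show ?thesis using assms by (simp add: orthogonal_matrix_def)
qed

lemma linear_le_quadratic_imp_zero:
  fixes a K :: real
  assumes le: "\<And>t. 2 * t * a \<le> t\<^sup>2 * K"
  shows "a = 0"
proof -
  define k where "k = \<bar>K\<bar> + 1"
  have k: "k > 0" "K < k" unfolding k_def by auto
  have "2 * (a / k) * a \<le> (a / k)\<^sup>2 * K" by (rule le)
  then have "2 * a\<^sup>2 * k \<le> a\<^sup>2 * K"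
    using k by (simp add: power2_eq_square field_simps)
  then have "a\<^sup>2 * (2 * k - K) \<le> 0" by (simp add: algebra_simps)
  moreover have "2 * k - K > 0" using k by simp
  ultimately show ?thesis
    by (smt (verit) mult_pos_pos zero_less_power2)
qed

lemma symmetric_rayleigh_maximiser_eigenvector:
  fixes A :: "real^'n^'n"
  assumes sym: "transpose A = A" and S: "subspace S" and inv: "\<forall>x\<in>S. A *v x \<in> S"
    and u: "u \<in> S" "u \<bullet> u = 1"
    and max: "\<And>y. y \<in> S \<Longrightarrow> y \<bullet> (A *v y) \<le> (u \<bullet> (A *v u)) * (y \<bullet> y)"
  shows "A *v u = (u \<bullet> (A *v u)) *\<^sub>R u"
proof -
  define l where "l = u \<bullet> (A *v u)"
  have orth: "v \<bullet> (A *v u) = 0" if v: "v \<in> S" "v \<bullet> u = 0" for v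
  proof (rule linear_le_quadratic_imp_zero)
    fix t :: real
    have "u + t *\<^sub>R v \<in> S" using S u v by (simp add: subspace_add subspace_scale)
    from max[OF this]
    have le: "(u + t *\<^sub>R v) \<bullet> (A *v (u + t *\<^sub>R v)) \<le> l * ((u + t *\<^sub>R v) \<bullet> (u + t *\<^sub>R v))"
      unfolding l_def .
    have av: "A *v (u + t *\<^sub>R v) = A *v u + t *\<^sub>R (A *v v)"
      by (simp add: matrix_vector_right_distrib matrix_vector_mult_scaleR)
    have uv: "u \<bullet> (A *v v) = v \<bullet> (A *v u)"
      using symmetric_inner_commute[OF sym, of u v] by (simp add: inner_commute)
    have "(u + t *\<^sub>R v) \<bullet> (A *v (u + t *\<^sub>R v))
        = l + 2 * t * (v \<bullet> (A *v u)) + t\<^sup>2 * (v \<bullet> (A *v v))"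
      unfolding av l_def by (simp add: inner_add_left inner_add_right uv algebra_simps power2_eq_square)
    moreover have "(u + t *\<^sub>R v) \<bullet> (u + t *\<^sub>R v) = 1 + t\<^sup>2 * (v \<bullet> v)"
      using u(2) v(2) by (simp add: inner_add_left inner_add_right power2_eq_square inner_commute)
    ultimately show "2 * t * (v \<bullet> (A *v u)) \<le> t\<^sup>2 * (l * (v \<bullet> v) - v \<bullet> (A *v v))"
      using le by (simp add: algebra_simps)
  qed
  define w where "w = A *v u - l *\<^sub>R u"
  have wS: "w \<in> S" using inv u S unfolding w_def by (simp add: subspace_diff subspace_scale)
  have wu: "w \<bullet> u = 0" unfolding w_def using u(2)
    by (simp add: inner_diff_left l_def inner_commute[of "A *v u" u])
  have "w \<bullet> w = w \<bullet> (A *v u) - l * (w \<bullet> u)"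
    by (metis w_def inner_diff_right inner_scaleR_right)
  then have "w \<bullet> w = 0" using orth[OF wS wu] wu by simp
  then show ?thesis unfolding w_def l_def by simp
qed

lemma symmetric_invariant_subspace_has_eigenvector:
  fixes A :: "real^'n^'n"
  assumes sym: "transpose A = A" and S: "subspace S" and inv: "\<forall>x\<in>S. A *v x \<in> S"
    and ne: "S \<noteq> {0}"
  shows "\<exists>u\<in>S. norm u = 1 \<and> (\<exists>l. A *v u = l *\<^sub>R u)"
proof -
  let ?K = "S \<inter> sphere 0 1"
  have "compact ?K"
    by (simp add: S closed_subspace closed_Int_compact)
  moreover obtain x where x: "x \<in> S" "x \<noteq> 0" using ne S subspace_0 by blast
  then have "x /\<^sub>R norm x \<in> ?K" using S by (simp add: subspace_scale)
  then have "?K \<noteq> {}" by blast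
  moreover have "continuous_on ?K (\<lambda>x. x \<bullet> (A *v x))"
  proof -
    have "continuous_on ?K ((*v) A)"
      by (rule linear_continuous_on) (rule matrix_vector_mul_bounded_linear)
    then show ?thesis by (intro continuous_on_inner continuous_on_id)
  qed
  ultimately have "\<exists>u\<in>?K. \<forall>y\<in>?K. y \<bullet> (A *v y) \<le> u \<bullet> (A *v u)"
    by (rule continuous_attains_sup)
  then obtain u where u: "u \<in> ?K" and umax: "\<And>y. y \<in> ?K \<Longrightarrow> y \<bullet> (A *v y) \<le> u \<bullet> (A *v u)"
    by blast
  have uu: "u \<bullet> u = 1" using u by (simp add: dot_square_norm)
  have "y \<bullet> (A *v y) \<le> (u \<bullet> (A *v u)) * (y \<bullet> y)" if y: "y \<in> S" for y
  proof (cases "y = 0")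
    case False
    then have "y /\<^sub>R norm y \<in> ?K" using y S by (simp add: subspace_scale)
    then have "(y /\<^sub>R norm y) \<bullet> (A *v (y /\<^sub>R norm y)) \<le> u \<bullet> (A *v u)" by (rule umax)
    then have "(y \<bullet> (A *v y)) / (norm y)\<^sup>2 \<le> u \<bullet> (A *v u)"
      by (simp add: matrix_vector_mult_scaleR power2_eq_square divide_simps)
    then show ?thesis using False by (simp add: divide_simps dot_square_norm)
  qed simp
  from symmetric_rayleigh_maximiser_eigenvector[OF sym S inv _ uu this] u show ?thesis by auto
qed

lemma symmetric_eigenvectors_orthogonal_complement_invariant:
  fixes A :: "real^'n^'n"
  assumes sym: "transpose A = A" and B: "\<And>b. b \<in> B \<Longrightarrow> \<exists>l. A *v b = l *\<^sub>R b"
  defines "S \<equiv> {x. \<forall>b\<in>B. b \<bullet> x = 0}"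
  shows "subspace S" and "\<forall>x\<in>S. A *v x \<in> S"
proof -
  show "subspace S" unfolding S_def subspace_def by (auto simp: inner_add_right)
  have "b \<bullet> (A *v x) = 0" if x: "x \<in> S" and b: "b \<in> B" for x b
  proof -
    obtain l where l: "A *v b = l *\<^sub>R b" using B[OF b] by blast
    have "b \<bullet> (A *v x) = (A *v b) \<bullet> x" by (rule symmetric_inner_commute[OF sym])
    then show ?thesis using x b l unfolding S_def by simp
  qed
  then show "\<forall>x\<in>S. A *v x \<in> S" unfolding S_def by blast
qed

text \<open>A maximal orthonormal family of eigenvectors spans: otherwise its orthogonal complement is a
  nonzero invariant subspace and contains a further eigenvector.\<close>

lemma symmetric_matrix_orthonormal_eigenbasis:
  fixes A :: "real^'n^'n"
  assumes sym: "transpose A = A"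
  obtains B where "pairwise orthogonal B" "\<And>b. b \<in> B \<Longrightarrow> norm b = 1 \<and> (\<exists>l. A *v b = l *\<^sub>R b)"
    "finite B" "card B = CARD('n)"
proof -
  define P where "P B \<longleftrightarrow> pairwise orthogonal B \<and> (\<forall>b\<in>B. norm b = 1 \<and> (\<exists>l. A *v b = l *\<^sub>R b))"
    for B :: "(real^'n) set"
  have indep: "independent B" if "P B" for B
    using that unfolding P_def by (intro pairwise_orthogonal_independent) auto
  have "card B < CARD('n) + 1" if "P B" for B
    using independent_bound[OF indep[OF that]] by simp
  moreover have "P {}" unfolding P_def by simp
  ultimately obtain B where PB: "P B" and Bmax: "\<And>B'. P B' \<Longrightarrow> card B' \<le> card B"
    using ex_has_greatest_nat[of P "{}" card] by blast
  have finB: "finite B" using independent_bound[OF indep[OF PB]] by simp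
  have "span B = UNIV"
  proof (rule ccontr)
    assume "span B \<noteq> UNIV"
    then obtain a :: "real^'n" where a: "a \<noteq> 0" "\<forall>x\<in>span B. a \<bullet> x = 0"
      using span_not_UNIV_orthogonal by blast
    define S where "S = {x. \<forall>b\<in>B. b \<bullet> x = 0}"
    have eig: "\<And>b. b \<in> B \<Longrightarrow> \<exists>l. A *v b = l *\<^sub>R b" using PB unfolding P_def by blast
    have subS: "subspace S" unfolding S_def
      by (rule symmetric_eigenvectors_orthogonal_complement_invariant(1)[OF sym eig])
    have invS: "\<forall>x\<in>S. A *v x \<in> S" unfolding S_def
      by (rule symmetric_eigenvectors_orthogonal_complement_invariant(2)[OF sym eig])
    have "a \<in> S" using a(2) span_base unfolding S_def by (force simp: inner_commute)
    then have "S \<noteq> {0}" using a(1) by blast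
    then obtain u where u: "u \<in> S" "norm u = 1" "\<exists>l. A *v u = l *\<^sub>R u"
      using symmetric_invariant_subspace_has_eigenvector[OF sym subS invS] by blast
    have uB: "u \<notin> B"
    proof
      assume "u \<in> B"
      then have "u \<bullet> u = 0" using u(1) unfolding S_def by blast
      then show False using u(2) by simp
    qed
    have "P (insert u B)"
      using PB u uB unfolding P_def pairwise_insert S_def orthogonal_def
      by (auto simp: inner_commute)
    then have "card (insert u B) \<le> card B" by (rule Bmax)
    then show False using uB finB by simp
  qed
  then have "card B = CARD('n)"
    using dim_span_eq_card_independent[OF indep[OF PB]] by (simp add: dim_UNIV)
  then show ?thesis using that[of B] PB finB unfolding P_def by blast
qed

lemma symmetric_matrix_diagonalization:
  fixes A :: "real^'n^'n"
  assumes sym: "transpose A = A"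
  shows "\<exists>Q l. orthogonal_matrix Q \<and> A = Q ** diag_mat l ** transpose Q"
proof -
  obtain B where B: "pairwise orthogonal B" "\<And>b. b \<in> B \<Longrightarrow> norm b = 1 \<and> (\<exists>l. A *v b = l *\<^sub>R b)"
    "finite B" "card B = CARD('n)"
    using symmetric_matrix_orthonormal_eigenbasis[OF sym] by blast
  obtain h where h: "bij_betw h (UNIV::'n set) B"
    using finite_same_card_bij[of "UNIV::'n set" B] B(3,4) by auto
  have hB: "h j \<in> B" for j using h by (auto simp: bij_betw_def)
  have hinj: "h i = h j \<Longrightarrow> i = j" for i j using h by (auto simp: bij_betw_def inj_def)
  define Q :: "real^'n^'n" where "Q = (\<chi> i j. h j $ i)"
  have col: "column j Q = h j" for j by (simp add: Q_def column_def vec_eq_iff)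
  have oQ: "orthogonal_matrix Q"
    unfolding orthogonal_matrix_orthonormal_columns col
  proof (intro conjI allI impI)
    show "norm (h i) = 1" for i using B(2) hB by blast
    fix i j :: 'n assume "i \<noteq> j"
    then have "h i \<noteq> h j" using hinj by blast
    then show "orthogonal (h i) (h j)" using B(1) hB unfolding pairwise_def by blast
  qed
  define l where "l = (\<chi> j. SOME c. A *v h j = c *\<^sub>R h j)"
  have lj: "A *v h j = (l $ j) *\<^sub>R h j" for j
  proof -
    have "\<exists>c. A *v h j = c *\<^sub>R h j" using B(2) hB by blast
    then show ?thesis unfolding l_def vec_lambda_beta by (rule someI_ex)
  qed
  have "(A ** Q) $ i $ j = (A *v h j) $ i" for i j
    by (simp add: Q_def matrix_matrix_mult_def matrix_vector_mult_def)
  then have AQ: "A ** Q = Q ** diag_mat l"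
    by (simp add: vec_eq_iff lj Q_def mult.commute)
  have "A = A ** (Q ** transpose Q)" using oQ by (simp add: orthogonal_matrix_mul_transpose)
  also have "\<dots> = Q ** diag_mat l ** transpose Q" by (simp add: matrix_mul_assoc AQ)
  finally show ?thesis using oQ by blast
qed

section \<open>Positive definite matrices and the log-det inequality\<close>

lemma det_orthogonal_conj:
  fixes Q :: "real^'n^'n"
  assumes "orthogonal_matrix Q"
  shows "det (Q ** diag_mat a ** transpose Q) = (\<Prod>i\<in>UNIV. a$i)"
proof -
  have "det Q * det Q = 1" using det_orthogonal_matrix[OF assms] by auto
  then show ?thesis by (simp add: det_mul det_transpose det_diag_mat)
qed

lemma trace_orthogonal_conj:
  fixes Q :: "real^'n^'n"
  assumes "orthogonal_matrix Q"
  shows "trace (Q ** diag_mat a ** transpose Q) = (\<Sum>i\<in>UNIV. a$i)"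
proof -
  have "trace (Q ** diag_mat a ** transpose Q) = trace (transpose Q ** (Q ** diag_mat a))"
    by (rule trace_mul_sym)
  also have "transpose Q ** (Q ** diag_mat a) = (transpose Q ** Q) ** diag_mat a"
    by (simp only: matrix_mul_assoc)
  also have "\<dots> = diag_mat a"
    using assms by (simp only: orthogonal_matrix_mul_transpose matrix_mul_lid)
  finally show ?thesis by (simp only: trace_diag_mat)
qed

lemma orthogonal_conj_mul:
  fixes Q :: "real^'n^'n"
  assumes "orthogonal_matrix Q"
  shows "(Q ** diag_mat a ** transpose Q) ** (Q ** diag_mat b ** transpose Q)
    = Q ** diag_mat (\<chi> i. a$i * b$i) ** transpose Q"
proof -
  have "(Q ** diag_mat a ** transpose Q) ** (Q ** diag_mat b ** transpose Q)
      = Q ** diag_mat a ** (transpose Q ** Q) ** diag_mat b ** transpose Q"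
    by (simp only: matrix_mul_assoc)
  also have "\<dots> = Q ** (diag_mat a ** diag_mat b) ** transpose Q"
    using assms by (simp only: orthogonal_matrix_mul_transpose matrix_mul_rid matrix_mul_assoc)
  finally show ?thesis by (simp only: diag_mat_mul_diag_mat)
qed

lemma scaleR_orthogonal_conj:
  fixes Q :: "real^'n^'n"
  shows "k *\<^sub>R (Q ** diag_mat a ** transpose Q) = Q ** diag_mat (\<chi> i. k * a$i) ** transpose Q"
  by (simp add: scalar_matrix_assoc matrix_scalar_ac scaleR_diag_mat[symmetric])

lemma scaleR_mat_1_orthogonal_conj:
  fixes Q :: "real^'n^'n"
  assumes "orthogonal_matrix Q"
  shows "k *\<^sub>R mat 1 = Q ** diag_mat (\<chi> i. k) ** transpose Q"
proof -
  have "Q ** diag_mat (\<chi> i. 1) ** transpose Q = mat 1"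
    using assms by (simp only: diag_mat_const scaleR_one matrix_mul_rid orthogonal_matrix_mul_transpose)
  then show ?thesis using scaleR_orthogonal_conj[of k Q "\<chi> i. 1"] by simp
qed

lemma orthogonal_conj_add:
  fixes Q :: "real^'n^'n"
  shows "Q ** diag_mat a ** transpose Q + Q ** diag_mat b ** transpose Q
    = Q ** diag_mat (\<chi> i. a$i + b$i) ** transpose Q"
  by (simp only: diag_mat_add[symmetric] matrix_add_ldistrib matrix_add_rdistrib)

lemma transpose_orthogonal_conj [simp]:
  "transpose (Q ** diag_mat a ** transpose Q) = Q ** diag_mat a ** transpose Q"
  by (simp only: matrix_transpose_mul transpose_transpose transpose_diag_mat matrix_mul_assoc)

lemma orthogonal_conj_mult_vec:
  fixes Q :: "real^'n^'n"
  assumes "orthogonal_matrix Q"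
  shows "(Q ** diag_mat a ** transpose Q) *v (Q *v y) = Q *v (diag_mat a *v y)"
proof -
  have "(Q ** diag_mat a ** transpose Q) ** Q = Q ** diag_mat a"
    using assms by (simp only: matrix_mul_assoc[symmetric] orthogonal_matrix_mul_transpose matrix_mul_rid)
  then show ?thesis by (simp only: matrix_vector_mul_assoc)
qed

lemma matrix_inv_orthogonal_conj:
  fixes Q :: "real^'n^'n"
  assumes Q: "orthogonal_matrix Q" and a: "\<And>i. a$i \<noteq> 0"
  shows "matrix_inv (Q ** diag_mat a ** transpose Q) = Q ** diag_mat (\<chi> i. 1 / a$i) ** transpose Q"
proof (rule matrix_inv_unique)
  have "(\<chi> i. a $ i * (\<chi> i. 1 / a$i) $ i) = (\<chi> i. 1)" "(\<chi> i. (\<chi> i. 1 / a$i) $ i * a $ i) = (\<chi> i. 1)"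
    using a by (simp_all add: vec_eq_iff)
  then show "Q ** diag_mat a ** transpose Q ** (Q ** diag_mat (\<chi> i. 1 / a$i) ** transpose Q) = mat 1"
    and "Q ** diag_mat (\<chi> i. 1 / a$i) ** transpose Q ** (Q ** diag_mat a ** transpose Q) = mat 1"
    using scaleR_mat_1_orthogonal_conj[OF Q, of 1] by (simp_all add: orthogonal_conj_mul[OF Q])
qed

lemma spd_orthogonal_conj_pos:
  fixes Q :: "real^'n^'n"
  assumes Q: "orthogonal_matrix Q" and s: "spd (Q ** diag_mat a ** transpose Q)"
  shows "a $ i > 0"
proof -
  define e :: "real^'n" where "e = axis i 1"
  have "Q *v e \<noteq> 0"
  proof
    assume "Q *v e = 0"
    then have "transpose Q *v (Q *v e) = 0" by simp
    then have "e = 0" using Q by (simp add: matrix_vector_mul_assoc orthogonal_matrix_mul_transpose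
        del: transpose_matrix_vector)
    then show False unfolding e_def by (simp add: axis_eq_0_iff)
  qed
  then have "(Q *v e) \<bullet> ((Q ** diag_mat a ** transpose Q) *v (Q *v e)) > 0"
    using s unfolding spd_def by blast
  also have "(Q *v e) \<bullet> ((Q ** diag_mat a ** transpose Q) *v (Q *v e)) = e \<bullet> (diag_mat a *v e)"
    by (simp add: orthogonal_conj_mult_vec[OF Q] inner_orthogonal_matrix_mult_vec[OF Q])
  also have "\<dots> = a $ i" by (simp add: e_def inner_axis' diag_mat_mult_vec)
  finally show ?thesis .
qed

lemma spd_diagonalization:
  fixes B :: "real^'n^'n"
  assumes "spd B"
  obtains Q b where "orthogonal_matrix Q" "\<And>i. b$i > 0" "B = Q ** diag_mat b ** transpose Q"
proof -
  obtain Q b where Q: "orthogonal_matrix Q" "B = Q ** diag_mat b ** transpose Q"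
    using symmetric_matrix_diagonalization assms unfolding spd_def by blast
  have "\<And>i. b$i > 0" using spd_orthogonal_conj_pos[OF Q(1)] assms Q(2) by blast
  then show ?thesis by (rule that[OF Q(1) _ Q(2)])
qed

lemma spd_det_pos:
  fixes B :: "real^'n^'n"
  assumes "spd B" shows "det B > 0"
proof -
  obtain Q b where "orthogonal_matrix Q" "\<And>i. b$i > 0" "B = Q ** diag_mat b ** transpose Q"
    using spd_diagonalization[OF assms] by blast
  then show ?thesis by (simp add: det_orthogonal_conj prod_pos)
qed

lemma spd_matrix_inv:
  fixes X :: "real^'n^'n"
  assumes "spd X"
  shows "X ** matrix_inv X = mat 1" "matrix_inv X ** X = mat 1"
proof -
  obtain Q b where Q: "orthogonal_matrix Q" and b: "\<And>i. b$i > 0" and X: "X = Q ** diag_mat b ** transpose Q"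
    using spd_diagonalization[OF assms] by blast
  have "(\<chi> i. b $ i * (\<chi> i. 1 / b$i) $ i) = (\<chi> i. 1)" "(\<chi> i. (\<chi> i. 1 / b$i) $ i * b $ i) = (\<chi> i. 1)"
    using b by (simp_all add: vec_eq_iff less_imp_neq[symmetric])
  then show "X ** matrix_inv X = mat 1" "matrix_inv X ** X = mat 1"
    unfolding X using b scaleR_mat_1_orthogonal_conj[OF Q, of 1]
    by (simp_all add: matrix_inv_orthogonal_conj[OF Q] orthogonal_conj_mul[OF Q] less_imp_neq[symmetric])
qed

lemma spd_scaleR:
  fixes X :: "real^'n^'n"
  assumes "spd X" "k > 0"
  shows "spd (k *\<^sub>R X)"
  using assms unfolding spd_def by (simp add: transpose_scalar scaleR_matrix_vector_assoc[symmetric])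

lemma spd_mat_1: "spd (mat 1 :: real^'n^'n)"
  unfolding spd_def by simp

lemma matrix_inv_scaleR:
  fixes X :: "real^'n^'n"
  assumes "spd X" "k \<noteq> 0"
  shows "matrix_inv (k *\<^sub>R X) = (1 / k) *\<^sub>R matrix_inv X"
  by (rule matrix_inv_unique) (use spd_matrix_inv[OF assms(1)] assms(2) in \<open>simp_all add: scaleR_matrix_mul_scaleR\<close>)

lemma matrix_inv_scaleR_mat_1:
  "c \<noteq> 0 \<Longrightarrow> matrix_inv (c *\<^sub>R (mat 1 :: real^'n^'n)) = (1 / c) *\<^sub>R mat 1"
  by (rule matrix_inv_unique) (simp_all add: scaleR_matrix_mul_scaleR)

lemma spd_sqrt:
  fixes B :: "real^'n^'n"
  assumes "spd B"
  obtains R S where "transpose R = R" "R ** S = mat 1" "S ** R = mat 1" "S ** S = B"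
    "matrix_inv B = R ** R"
proof -
  obtain Q b where Q: "orthogonal_matrix Q" and b: "\<And>i. b$i > 0" and B: "B = Q ** diag_mat b ** transpose Q"
    using spd_diagonalization[OF assms] by blast
  define R where "R = Q ** diag_mat (\<chi> i. 1 / sqrt (b$i)) ** transpose Q"
  define S where "S = Q ** diag_mat (\<chi> i. sqrt (b$i)) ** transpose Q"
  have one: "mat 1 = Q ** diag_mat (\<chi> i. 1) ** transpose Q"
    using scaleR_mat_1_orthogonal_conj[OF Q, of 1] by simp
  have "(\<chi> i. (\<chi> i. 1 / sqrt (b$i)) $ i * (\<chi> i. sqrt (b$i)) $ i) = (\<chi> i. 1)"
    "(\<chi> i. (\<chi> i. sqrt (b$i)) $ i * (\<chi> i. 1 / sqrt (b$i)) $ i) = (\<chi> i. 1)"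
    "(\<chi> i. (\<chi> i. sqrt (b$i)) $ i * (\<chi> i. sqrt (b$i)) $ i) = b"
    using b by (simp_all add: vec_eq_iff less_imp_neq[symmetric] less_imp_le)
  then have RS: "R ** S = mat 1" and SR: "S ** R = mat 1" and SS: "S ** S = B"
    unfolding R_def S_def orthogonal_conj_mul[OF Q] one B by simp_all
  have "matrix_inv B = R ** R"
  proof (rule matrix_inv_unique)
    show "B ** (R ** R) = mat 1" "R ** R ** B = mat 1"
      by (metis SS RS SR matrix_mul_assoc matrix_mul_rid)+
  qed
  moreover have "transpose R = R" unfolding R_def by simp
  ultimately show ?thesis by (intro that[OF _ RS SR SS])
qed

lemma spd_congruence:
  fixes A R S :: "real^'n^'n"
  assumes A: "spd A" and R: "transpose R = R" and SR: "S ** R = mat 1"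
  shows "spd (R ** A ** R)"
  unfolding spd_def
proof (intro conjI allI impI)
  show "transpose (R ** A ** R) = R ** A ** R"
    using A R unfolding spd_def by (simp add: matrix_transpose_mul matrix_mul_assoc)
  fix x :: "real^'n" assume x: "x \<noteq> 0"
  have "R *v x \<noteq> 0"
  proof
    assume "R *v x = 0"
    then have "(S ** R) *v x = 0" by (simp add: matrix_vector_mul_assoc[symmetric])
    then show False using x SR by simp
  qed
  then have "(R *v x) \<bullet> (A *v (R *v x)) > 0" using A unfolding spd_def by blast
  also have "(R *v x) \<bullet> (A *v (R *v x)) = x \<bullet> ((R ** A ** R) *v x)"
    using symmetric_inner_commute[OF R] by (simp add: matrix_vector_mul_assoc[symmetric])
  finally show "0 < x \<bullet> ((R ** A ** R) *v x)" .
qed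

text \<open>The $l_i$ are the eigenvalues of $B^{-1/2} A B^{-1/2}$.\<close>

lemma spd_relative_eigenvalues:
  fixes A B :: "real^'n^'n"
  assumes A: "spd A" and B: "spd B"
  obtains l :: "real^'n" where "\<And>i. l $ i > 0"
    and "trace (A ** matrix_inv B) = (\<Sum>i\<in>UNIV. l $ i)"
    and "ln (det A) - ln (det B) = (\<Sum>i\<in>UNIV. ln (l $ i))"
    and "(\<And>i. l $ i = 1) \<Longrightarrow> A = B"
proof -
  obtain R S where R: "transpose R = R" and RS: "R ** S = mat 1" and SR: "S ** R = mat 1"
    and SS: "S ** S = B" and invB: "matrix_inv B = R ** R"
    using spd_sqrt[OF B] by blast
  obtain P l where P: "orthogonal_matrix P" and l: "\<And>i. l$i > 0"
    and M: "R ** A ** R = P ** diag_mat l ** transpose P"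
    using spd_diagonalization[OF spd_congruence[OF A R SR]] by blast
  have "trace (A ** matrix_inv B) = trace (R ** (A ** R))"
    by (metis invB matrix_mul_assoc trace_mul_sym)
  then have tr: "trace (A ** matrix_inv B) = (\<Sum>i\<in>UNIV. l$i)"
    using trace_orthogonal_conj[OF P] M by (simp add: matrix_mul_assoc)
  have A_eq: "A = S ** (R ** A ** R) ** S"
    by (metis SR RS matrix_mul_assoc matrix_mul_lid matrix_mul_rid)
  have "det A = det S * det (R ** A ** R) * det S"
    by (subst A_eq) (simp only: det_mul)
  also have "\<dots> = det (S ** S) * det (R ** A ** R)" by (simp add: det_mul)
  finally have detA: "det A = det B * (\<Prod>i\<in>UNIV. l$i)"
    using det_orthogonal_conj[OF P] M SS by simp
  have "(\<Prod>i\<in>UNIV. l$i) > 0" using l by (simp add: prod_pos)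
  then have "ln (det A) - ln (det B) = ln (\<Prod>i\<in>UNIV. l$i)"
    using ln_mult_pos[OF spd_det_pos[OF B]] unfolding detA by simp
  also have "\<dots> = (\<Sum>i\<in>UNIV. ln (l$i))"
    using l by (subst ln_prod) (auto simp: less_imp_neq[symmetric])
  finally have ln: "ln (det A) - ln (det B) = (\<Sum>i\<in>UNIV. ln (l$i))" .
  have eq: "A = B" if "\<And>i. l $ i = 1"
  proof -
    have "l = (\<chi> i. 1)" using that by (simp add: vec_eq_iff)
    then have "R ** A ** R = mat 1"
      using M scaleR_mat_1_orthogonal_conj[OF P, of 1] by simp
    then show "A = B" using A_eq SS by simp
  qed
  show ?thesis by (rule that[OF l tr ln eq])
qed

lemma ln_det_diff_le_trace:
  fixes A B :: "real^'n^'n"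
  assumes "spd A" "spd B"
  shows "ln (det A) - ln (det B) \<le> trace (A ** matrix_inv B) - real CARD('n)"
proof -
  obtain l :: "real^'n" where l: "\<And>i. l $ i > 0" "trace (A ** matrix_inv B) = (\<Sum>i\<in>UNIV. l $ i)"
    "ln (det A) - ln (det B) = (\<Sum>i\<in>UNIV. ln (l $ i))"
    using spd_relative_eigenvalues[OF assms] by blast
  have "(\<Sum>i\<in>UNIV. ln (l $ i)) \<le> (\<Sum>i\<in>UNIV. l $ i - 1)"
    using ln_le_minus_one[OF l(1)] by (rule sum_mono)
  then show ?thesis using l by (simp add: sum_subtractf)
qed

lemma ln_det_diff_eq_trace_imp_eq:
  fixes A B :: "real^'n^'n"
  assumes "spd A" "spd B"
    and eq: "trace (A ** matrix_inv B) - real CARD('n) \<le> ln (det A) - ln (det B)"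
  shows "A = B"
proof -
  obtain l :: "real^'n" where l: "\<And>i. l $ i > 0" "trace (A ** matrix_inv B) = (\<Sum>i\<in>UNIV. l $ i)"
    "ln (det A) - ln (det B) = (\<Sum>i\<in>UNIV. ln (l $ i))" "(\<And>i. l $ i = 1) \<Longrightarrow> A = B"
    using spd_relative_eigenvalues[OF assms(1,2)] by blast
  have nn: "\<forall>i\<in>UNIV. 0 \<le> (l$i - 1) - ln (l$i)" using ln_le_minus_one[OF l(1)] by simp
  have "(\<Sum>i\<in>UNIV. (l$i - 1) - ln (l$i)) \<le> 0"
    using eq l(2,3) by (simp add: sum_subtractf)
  then have "(\<Sum>i\<in>UNIV. (l$i - 1) - ln (l$i)) = 0"
    using nn by (simp add: order_antisym sum_nonneg)
  then have "\<forall>i\<in>UNIV. ln (l$i) = l$i - 1" using nn by (simp add: sum_nonneg_eq_0_iff)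
  then show ?thesis using l(4) ln_eq_minus_one[OF l(1)] by blast
qed

section \<open>Second derivatives along a line\<close>

lemma trace_square_symmetric:
  fixes X :: "real^'n^'n"
  assumes "transpose X = X"
  shows "trace (X ** X) = (\<Sum>i\<in>UNIV. \<Sum>k\<in>UNIV. (X$i$k)\<^sup>2)"
proof -
  have s: "X$k$i = X$i$k" for i k using assms by (metis transpose_def vec_lambda_beta)
  show ?thesis unfolding trace_def matrix_matrix_mult_def by (simp add: s power2_eq_square)
qed

lemma trace_square_nonneg:
  fixes X :: "real^'n^'n"
  assumes "transpose X = X"
  shows "trace (X ** X) \<ge> 0"
  unfolding trace_square_symmetric[OF assms] by (intro sum_nonneg) simp

lemma trace_square_eq_0_imp_zero:
  fixes X :: "real^'n^'n"
  assumes "transpose X = X" "trace (X ** X) = 0"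
  shows "X = 0"
proof -
  have "\<forall>i\<in>UNIV. (\<Sum>k\<in>UNIV. (X$i$k)\<^sup>2) = 0"
    using assms(2) unfolding trace_square_symmetric[OF assms(1)]
    by (subst sum_nonneg_eq_0_iff[symmetric]) (auto intro: sum_nonneg)
  then have "(X$i$k)\<^sup>2 = 0" for i k
    by (metis (no_types, lifting) UNIV_I finite sum_nonneg_eq_0_iff zero_le_power2)
  then show ?thesis by (simp add: vec_eq_iff)
qed

lemma uniform_perturbation_radius:
  fixes c :: "'v \<Rightarrow> real" and mu :: "'v \<Rightarrow> real^'n"
  assumes V: "finite V" and c: "\<And>v. v \<in> V \<Longrightarrow> c v > 0"
  obtains del where "del > 0" "\<And>w s i. w \<in> V \<Longrightarrow> \<bar>s\<bar> < del \<Longrightarrow> c w + s * mu w $ i > 0"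
proof
  define Mu where "Mu w = (\<Sum>i\<in>UNIV. \<bar>mu w $ i\<bar>)" for w
  define del where "del = Min (insert 1 ((\<lambda>w. c w / (1 + Mu w)) ` V))"
  have Mu0: "Mu w \<ge> 0" for w unfolding Mu_def by (simp add: sum_nonneg)
  show "del > 0" unfolding del_def using V c Mu0
    by (subst Min_gr_iff) (auto intro!: divide_pos_pos add_pos_nonneg)
  fix w s i assume w: "w \<in> V" and s: "\<bar>s\<bar> < del"
  have "del \<le> c w / (1 + Mu w)" unfolding del_def using V w by (intro Min_le) auto
  then have "del * (1 + Mu w) \<le> c w" using Mu0[of w] by (simp add: le_divide_eq)
  moreover have "\<bar>s\<bar> * (1 + Mu w) < del * (1 + Mu w)"
    using s Mu0[of w] by (intro mult_strict_right_mono) auto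
  moreover have "\<bar>mu w $ i\<bar> \<le> Mu w" unfolding Mu_def by (rule member_le_sum) auto
  then have "\<bar>s * mu w $ i\<bar> \<le> \<bar>s\<bar> * (1 + Mu w)" by (simp add: abs_mult mult_left_mono)
  ultimately show "c w + s * mu w $ i > 0" by linarith
qed

lemma trace_line_mul_inv:
  fixes Q X :: "real^'n^'n"
  assumes Q: "orthogonal_matrix Q" and nz: "\<And>i. b + s * mu $ i \<noteq> 0"
  shows "trace ((a *\<^sub>R mat 1 + s *\<^sub>R X) ** matrix_inv (b *\<^sub>R mat 1 + s *\<^sub>R (Q ** diag_mat mu ** transpose Q)))
    = (\<Sum>i\<in>UNIV. (a + s * (transpose Q ** X ** Q) $ i $ i) / (b + s * mu $ i))"
proof -
  define Di where "Di = diag_mat (\<chi> i. 1 / (b + s * mu $ i))"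
  have "b *\<^sub>R mat 1 + s *\<^sub>R (Q ** diag_mat mu ** transpose Q) = Q ** diag_mat (\<chi> i. b + s * mu $ i) ** transpose Q"
    unfolding scaleR_mat_1_orthogonal_conj[OF Q, of b] scaleR_orthogonal_conj orthogonal_conj_add by simp
  then have inv: "matrix_inv (b *\<^sub>R mat 1 + s *\<^sub>R (Q ** diag_mat mu ** transpose Q)) = Q ** Di ** transpose Q"
    unfolding Di_def using matrix_inv_orthogonal_conj[OF Q, of "\<chi> i. b + s * mu $ i"] nz by simp
  have "transpose Q ** (a *\<^sub>R mat 1 + s *\<^sub>R X) ** Q
      = a *\<^sub>R (transpose Q ** Q) + s *\<^sub>R (transpose Q ** X ** Q)"
    by (simp add: matrix_add_ldistrib matrix_add_rdistrib matrix_scalar_ac scalar_matrix_assoc[symmetric])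
  then have QXQ: "transpose Q ** (a *\<^sub>R mat 1 + s *\<^sub>R X) ** Q = a *\<^sub>R mat 1 + s *\<^sub>R (transpose Q ** X ** Q)"
    using Q by (simp add: orthogonal_matrix_mul_transpose)
  have "trace ((a *\<^sub>R mat 1 + s *\<^sub>R X) ** (Q ** Di ** transpose Q))
      = trace (((a *\<^sub>R mat 1 + s *\<^sub>R X) ** Q ** Di) ** transpose Q)"
    by (simp add: matrix_mul_assoc)
  also have "\<dots> = trace ((transpose Q ** (a *\<^sub>R mat 1 + s *\<^sub>R X) ** Q) ** Di)"
    by (subst trace_mul_sym) (simp add: matrix_mul_assoc)
  also have "\<dots> = (\<Sum>i\<in>UNIV. (a + s * (transpose Q ** X ** Q) $ i $ i) / (b + s * mu $ i))"
    unfolding Di_def trace_mul_diag_mat QXQ by (simp add: mat_def)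
  finally show ?thesis unfolding inv .
qed

lemma second_dir_deriv_intro:
  assumes del: "del > 0"
    and g: "\<And>s. s \<in> ball 0 del \<Longrightarrow> ((\<lambda>s. f (\<lambda>v. m v + s *\<^sub>R H v)) has_real_derivative g' s) (at s)"
    and g': "(g' has_real_derivative q) (at 0)"
  shows "second_dir_deriv f m H q"
  unfolding second_dir_deriv_def
proof
  show "\<forall>\<^sub>F t in nhds 0. (\<lambda>s. f (\<lambda>v. m v + s *\<^sub>R H v)) differentiable (at t)"
    unfolding eventually_nhds
  proof (intro exI[of _ "ball 0 del"] conjI ballI)
    show "open (ball 0 del)" "0 \<in> ball 0 del" using del by auto
    show "(\<lambda>s. f (\<lambda>v. m v + s *\<^sub>R H v)) differentiable (at t)" if "t \<in> ball 0 del" for t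
      using g[OF that] unfolding real_differentiable_def by blast
  qed
  have "deriv (\<lambda>s. f (\<lambda>v. m v + s *\<^sub>R H v)) t = g' t" if "t \<in> ball 0 del" for t
    using g[OF that] by (rule DERIV_imp_deriv)
  then show "(deriv (\<lambda>s. f (\<lambda>v. m v + s *\<^sub>R H v)) has_real_derivative q) (at 0)"
    by (intro has_field_derivative_transform_within_open[OF g' open_ball[of 0 del]]) (use del in auto)
qed

lemma has_real_derivative_line_quotient:
  fixes al a be mu :: real
  assumes "be + s * mu \<noteq> 0"
  shows "((\<lambda>s. (al + s * a) / (be + s * mu)) has_real_derivative (a * be - al * mu) / (be + s * mu)\<^sup>2) (at s)"
proof -
  have "((\<lambda>s. (al + s * a) / (be + s * mu)) has_real_derivative
        ((0 + 1 * a) * (be + s * mu) - (al + s * a) * (0 + 1 * mu)) / ((be + s * mu) * (be + s * mu))) (at s)"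
    by (intro DERIV_divide DERIV_add DERIV_cmult_right DERIV_const DERIV_ident assms)
  then show ?thesis by (simp add: power2_eq_square algebra_simps)
qed

lemma has_real_derivative_inverse_square_line:
  fixes k be mu :: real
  assumes "be \<noteq> 0"
  shows "((\<lambda>s. k / (be + s * mu)\<^sup>2) has_real_derivative - 2 * mu * k / be ^ 3) (at 0)"
proof -
  have "((\<lambda>s. (be + s * mu)\<^sup>2) has_real_derivative (of_nat 2 * ((0 + 1 * mu) * (be + 0 * mu) ^ (2 - Suc 0)))) (at 0)"
    by (intro DERIV_power DERIV_add DERIV_const DERIV_cmult_right DERIV_ident)
  from DERIV_divide[OF DERIV_const this, of k]
  show ?thesis using assms by (simp add: power2_eq_square power3_eq_cube field_simps)
qed

lemma trace_square_scaleR_diff: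
  fixes X Y :: "real^'n^'n"
  shows "trace ((p *\<^sub>R X - q *\<^sub>R Y) ** (p *\<^sub>R X - q *\<^sub>R Y))
    = p\<^sup>2 * trace (X ** X) - 2 * p * q * trace (X ** Y) + q\<^sup>2 * trace (Y ** Y)"
proof -
  have "(p *\<^sub>R X - q *\<^sub>R Y) ** (p *\<^sub>R X - q *\<^sub>R Y)
      = (p * p) *\<^sub>R (X ** X) - (q * p) *\<^sub>R (Y ** X) - ((p * q) *\<^sub>R (X ** Y) - (q * q) *\<^sub>R (Y ** Y))"
    by (simp only: matrix_diff_rdistrib matrix_diff_ldistrib scaleR_matrix_mul_scaleR)
  then have "trace ((p *\<^sub>R X - q *\<^sub>R Y) ** (p *\<^sub>R X - q *\<^sub>R Y))
      = p * p * trace (X ** X) - q * p * trace (Y ** X) - (p * q * trace (X ** Y) - q * q * trace (Y ** Y))"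
    by (simp only: trace_sub trace_scaleR)
  then show ?thesis using trace_mul_sym[of Y X] by (simp add: power2_eq_square algebra_simps)
qed

text \<open>Second derivative at $s = 0$ of $s \mapsto \operatorname{tr}((\alpha I + sX)(\beta I + sY)^{-1})$,
  regrouped as a square minus a telescoping term.\<close>

lemma hessian_edge_term:
  fixes X Y Q :: "real^'n^'n" and al be :: real
  assumes al: "al > 0" and be: "be > 0" and Q: "orthogonal_matrix Q"
    and Y: "Y = Q ** diag_mat mu ** transpose Q"
  shows "(\<Sum>i\<in>UNIV. - 2 * mu $ i * ((transpose Q ** X ** Q) $ i $ i * be - al * mu $ i) / be ^ 3)
    = al / be * trace (((1 / al) *\<^sub>R X - (1 / be) *\<^sub>R Y) ** ((1 / al) *\<^sub>R X - (1 / be) *\<^sub>R Y))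
      - al / be * (trace (X ** X) / al\<^sup>2 - trace (Y ** Y) / be\<^sup>2)"
proof -
  define a where "a i = (transpose Q ** X ** Q) $ i $ i" for i
  have mu2: "(\<Sum>i\<in>UNIV. mu $ i * mu $ i) = trace (Y ** Y)"
    unfolding Y orthogonal_conj_mul[OF Q] trace_orthogonal_conj[OF Q] by simp
  have "(\<Sum>i\<in>UNIV. a i * mu $ i) = trace ((transpose Q ** X ** Q) ** diag_mat mu)"
    unfolding trace_mul_diag_mat a_def ..
  also have "\<dots> = trace (transpose Q ** (X ** Q ** diag_mat mu))"
    by (simp only: matrix_mul_assoc)
  also have "\<dots> = trace ((X ** Q ** diag_mat mu) ** transpose Q)"
    by (rule trace_mul_sym)
  finally have amu: "(\<Sum>i\<in>UNIV. a i * mu $ i) = trace (X ** Y)"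
    unfolding Y by (simp add: matrix_mul_assoc)
  have "(\<Sum>i\<in>UNIV. - 2 * mu $ i * (a i * be - al * mu $ i) / be ^ 3)
      = (\<Sum>i\<in>UNIV. 2 * al / be ^ 3 * (mu $ i * mu $ i) - 2 / be\<^sup>2 * (a i * mu $ i))"
    using be by (intro sum.cong refl) (simp add: field_simps power3_eq_cube power2_eq_square)
  also have "\<dots> = 2 * al / be ^ 3 * trace (Y ** Y) - 2 / be\<^sup>2 * trace (X ** Y)"
    unfolding sum_subtractf sum_distrib_left[symmetric] mu2 amu ..
  finally have "(\<Sum>i\<in>UNIV. - 2 * mu $ i * (a i * be - al * mu $ i) / be ^ 3)
      = 2 * al / be ^ 3 * trace (Y ** Y) - 2 / be\<^sup>2 * trace (X ** Y)" .
  moreover have "2 * al / be ^ 3 * r - 2 / be\<^sup>2 * q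
      = al / be * ((1 / al)\<^sup>2 * p - 2 * (1 / al) * (1 / be) * q + (1 / be)\<^sup>2 * r)
        - al / be * (p / al\<^sup>2 - r / be\<^sup>2)" for p q r
    using al be by (simp add: field_simps power2_eq_square power3_eq_cube)
  ultimately show ?thesis unfolding a_def[symmetric] trace_square_scaleR_diff by presburger
qed

section \<open>Balanced weights on an acyclic graph\<close>

lemma eq_if_scaling_minimised_at_1:
  fixes P Q :: real
  assumes P: "P > 0" and Q: "Q > 0" and h: "\<And>t. t > 0 \<Longrightarrow> 0 \<le> (t - 1) * P + (1 / t - 1) * Q"
  shows "P = Q"
proof -
  define t where "t = sqrt Q / sqrt P"
  have "0 \<le> (t - 1) * P + (1 / t - 1) * Q" using P Q unfolding t_def by (intro h) simp
  also have "\<dots> = - (sqrt P - sqrt Q)\<^sup>2"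
    unfolding t_def using P Q by (simp add: field_simps power2_eq_square)
  finally have "sqrt P = sqrt Q" by simp
  then show ?thesis using P Q by simp
qed

lemma compact_PiE_UNIV:
  fixes S :: "'a \<Rightarrow> real set"
  assumes "\<And>v. compact (S v)"
  shows "compact (PiE UNIV S)"
proof -
  have "compactin (product_topology (\<lambda>i. euclidean) UNIV) (PiE UNIV S)"
    using assms by (subst compactin_PiE) auto
  then show ?thesis by (simp add: euclidean_product_topology)
qed

locale dag_with_boundary =
  fixes V :: "'v set" and E :: "('v \<times> 'v) set" and G :: "'v set"
  assumes finV: "finite V" and EV: "E \<subseteq> V \<times> V" and acyc: "acyclic E"
    and GV: "G \<subseteq> V" and sinksG: "sinks V E \<subseteq> G" and sourcesG: "sources V E \<subseteq> G"
begin

definition out_ratio :: "('v \<Rightarrow> real) \<Rightarrow> 'v \<Rightarrow> real" where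
  "out_ratio c u = (\<Sum>e\<in>{e\<in>E. fst e = u}. c u / c (snd e))"

definition in_ratio :: "('v \<Rightarrow> real) \<Rightarrow> 'v \<Rightarrow> real" where
  "in_ratio c u = (\<Sum>e\<in>{e\<in>E. snd e = u}. c (fst e) / c u)"

definition balanced :: "('v \<Rightarrow> real) \<Rightarrow> bool" where
  "balanced c \<longleftrightarrow> (\<forall>u\<in>V - G. out_ratio c u = in_ratio c u)"

definition ratio_sum :: "('v \<Rightarrow> real) \<Rightarrow> real" where
  "ratio_sum c = (\<Sum>e\<in>E. c (fst e) / c (snd e))"

definition admissible :: "('v \<Rightarrow> real) \<Rightarrow> ('v \<Rightarrow> real) set" where
  "admissible cb = {c. (\<forall>v\<in>V. 0 < c v) \<and> (\<forall>v\<in>G. c v = cb v)}"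

definition descendants :: "'v \<Rightarrow> 'v set" where
  "descendants u = {w. (u, w) \<in> E\<^sup>+}"

lemma finite_edges: "finite E"
  using EV finV by (meson finite_SigmaI finite_subset)

lemma no_self_loop: "(u, u) \<notin> E"
  using acyc by (meson acyclic_def r_into_trancl')

lemma edge_vertices: "e \<in> E \<Longrightarrow> fst e \<in> V \<and> snd e \<in> V"
  using EV by auto

lemma interior_has_out_edge: "u \<in> V - G \<Longrightarrow> \<exists>w. (u, w) \<in> E"
  using sinksG unfolding sinks_def by auto

lemma interior_has_in_edge: "u \<in> V - G \<Longrightarrow> \<exists>v. (v, u) \<in> E"
  using sourcesG unfolding sources_def by auto

lemma edge_invariant_constant:
  assumes edge: "\<And>v w. (v, w) \<in> E \<Longrightarrow> f v = f w" and bd: "\<And>v. v \<in> G \<Longrightarrow> f v = K"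
    and v: "v \<in> V"
  shows "f v = K"
  using v
proof (induction v rule: wf_induct[OF finite_acyclic_wf_converse[OF finite_edges acyc]])
  case (1 u)
  show ?case
  proof (cases "u \<in> G")
    case False
    then obtain w where uw: "(u, w) \<in> E" using interior_has_out_edge 1(2) by blast
    then have "f w = K" using 1(1) edge_vertices by fastforce
    then show ?thesis using edge[OF uw] by simp
  qed (use bd in blast)
qed

text \<open>Summation by parts over the edges.\<close>

lemma balanced_telescoping:
  assumes "balanced c" and phi: "\<And>u. u \<in> G \<Longrightarrow> phi u = 0"
  shows "(\<Sum>e\<in>E. c (fst e) / c (snd e) * (phi (fst e) - phi (snd e))) = 0"
proof -
  have by_source: "(\<Sum>e\<in>E. c (fst e) / c (snd e) * phi (fst e)) = (\<Sum>u\<in>V. phi u * out_ratio c u)"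
  proof -
    have "(\<Sum>e\<in>E. c (fst e) / c (snd e) * phi (fst e))
        = (\<Sum>u\<in>V. \<Sum>e\<in>{e. e \<in> E \<and> fst e = u}. c (fst e) / c (snd e) * phi (fst e))"
      by (rule sum.group[symmetric]) (use finite_edges finV EV in auto)
    then show ?thesis
      unfolding out_ratio_def by (auto simp: sum_distrib_left intro!: sum.cong)
  qed
  have by_target: "(\<Sum>e\<in>E. c (fst e) / c (snd e) * phi (snd e)) = (\<Sum>u\<in>V. phi u * in_ratio c u)"
  proof -
    have "(\<Sum>e\<in>E. c (fst e) / c (snd e) * phi (snd e))
        = (\<Sum>u\<in>V. \<Sum>e\<in>{e. e \<in> E \<and> snd e = u}. c (fst e) / c (snd e) * phi (snd e))"
      by (rule sum.group[symmetric]) (use finite_edges finV EV in auto)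
    then show ?thesis
      unfolding in_ratio_def by (auto simp: sum_distrib_left intro!: sum.cong)
  qed
  have "(\<Sum>e\<in>E. c (fst e) / c (snd e) * (phi (fst e) - phi (snd e)))
      = (\<Sum>u\<in>V. phi u * (out_ratio c u - in_ratio c u))"
    unfolding right_diff_distrib sum_subtractf by_source by_target ..
  also have "\<dots> = 0"
  proof (rule sum.neutral, rule ballI)
    fix u assume "u \<in> V"
    then show "phi u * (out_ratio c u - in_ratio c u) = 0"
      using assms unfolding balanced_def by (cases "u \<in> G") auto
  qed
  finally show ?thesis .
qed

lemma descendants_subset: "descendants u \<subseteq> V"
  using trancl_subset_Sigma[OF EV] unfolding descendants_def by auto

lemma card_descendants_less:
  assumes "(u, w) \<in> E"
  shows "card (descendants w) < card (descendants u)"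
proof (rule psubset_card_mono)
  show "finite (descendants u)" using descendants_subset finV finite_subset by blast
  have "descendants w \<subseteq> descendants u"
    unfolding descendants_def using assms by (auto intro: trancl_into_trancl2)
  moreover have "w \<in> descendants u" unfolding descendants_def using assms by auto
  moreover have "w \<notin> descendants w" unfolding descendants_def using acyc by (auto simp: acyclic_def)
  ultimately show "descendants w \<subset> descendants u" by blast
qed

text \<open>Induction on the number of descendants: every interior vertex has an out-edge.\<close>

lemma bounded_above_if_edge_ratio_bounded:
  fixes c :: "'v \<Rightarrow> real"
  assumes edge: "\<And>v w. (v, w) \<in> E \<Longrightarrow> c v \<le> R * c w"
    and bd: "\<And>v. v \<in> G \<Longrightarrow> c v \<le> Mx" and R: "R \<ge> 1" and Mx: "Mx > 0" and u: "u \<in> V"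
  shows "c u \<le> R ^ card V * Mx"
proof -
  have "c u \<le> R ^ card (descendants u) * Mx" if "u \<in> V" for u
    using that
  proof (induction "card (descendants u)" arbitrary: u rule: less_induct)
    case less
    show ?case
    proof (cases "u \<in> G")
      case True
      have "c u \<le> Mx" using bd[OF True] .
      also have "\<dots> \<le> R ^ card (descendants u) * Mx" using R Mx by simp
      finally show ?thesis .
    next
      case False
      then obtain w where uw: "(u, w) \<in> E" using interior_has_out_edge less.prems by blast
      have lt: "card (descendants w) < card (descendants u)" by (rule card_descendants_less[OF uw])
      have "c w \<le> R ^ card (descendants w) * Mx"
        using less.hyps[OF lt] edge_vertices[of "(u, w)"] uw by simp
      then have "c u \<le> R * (R ^ card (descendants w) * Mx)"
        using edge[OF uw] R by (smt (verit, best) mult_left_mono)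
      also have "\<dots> = R ^ Suc (card (descendants w)) * Mx" by simp
      also have "\<dots> \<le> R ^ card (descendants u) * Mx"
        using lt R Mx by (intro mult_right_mono power_increasing) auto
      finally show ?thesis .
    qed
  qed
  moreover have "R ^ card (descendants u) * Mx \<le> R ^ card V * Mx"
    using card_mono[OF finV descendants_subset] R Mx by (intro mult_right_mono power_increasing) auto
  ultimately show ?thesis using u by fastforce
qed

end

lemma dag_with_boundary_converse: "dag_with_boundary V E G \<Longrightarrow> dag_with_boundary V (E\<inverse>) G"
  unfolding dag_with_boundary_def sinks_def sources_def by auto

context dag_with_boundary
begin

lemma bounded_below_if_edge_ratio_bounded:
  fixes c :: "'v \<Rightarrow> real"
  assumes edge: "\<And>v w. (v, w) \<in> E \<Longrightarrow> c v \<le> R * c w" and pos: "\<And>v. v \<in> V \<Longrightarrow> c v > 0"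
    and bd: "\<And>v. v \<in> G \<Longrightarrow> mn \<le> c v" and R: "R \<ge> 1" and mn: "mn > 0" and u: "u \<in> V"
  shows "mn / R ^ card V \<le> c u"
proof -
  interpret converse: dag_with_boundary V "E\<inverse>" G
    by (rule dag_with_boundary_converse) (rule dag_with_boundary_axioms)
  have "1 / c u \<le> R ^ card V * (1 / mn)"
  proof (rule converse.bounded_above_if_edge_ratio_bounded[of "\<lambda>v. 1 / c v", OF _ _ R _ u])
    fix v w assume "(v, w) \<in> E\<inverse>"
    then have vw: "(w, v) \<in> E" by simp
    then show "1 / c v \<le> R * (1 / c w)"
      using edge[OF vw] pos edge_vertices[OF vw] by (simp add: divide_simps mult.commute)
  next
    fix v assume "v \<in> G"
    then show "1 / c v \<le> 1 / mn" using bd mn pos GV by (auto simp: frac_le)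
  qed (use mn in simp)
  then show ?thesis using pos[OF u] mn R by (simp add: divide_simps mult.commute)
qed

lemma ratio_sum_ge_edge:
  assumes pos: "\<And>v. v \<in> V \<Longrightarrow> c v > 0" and e: "(v, w) \<in> E"
  shows "c v / c w \<le> ratio_sum c"
  unfolding ratio_sum_def
  using member_le_sum[OF e _ finite_edges, of "\<lambda>e. c (fst e) / c (snd e)"] pos edge_vertices
  by (simp add: less_imp_le)

lemma ratio_sum_rescale:
  assumes pos: "\<And>v. v \<in> V \<Longrightarrow> c v > 0" and u: "u \<in> V" and t: "t > 0"
  shows "ratio_sum (c(u := t * c u)) = ratio_sum c + (t - 1) * out_ratio c u + (1 / t - 1) * in_ratio c u"
proof -
  have cu: "c u > 0" using pos u by blast
  have "c' (fst e) / c' (snd e) = c (fst e) / c (snd e)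
      + ((if fst e = u then (t - 1) * (c u / c (snd e)) else 0)
      + (if snd e = u then (1 / t - 1) * (c (fst e) / c u) else 0))"
    if e: "e \<in> E" and c': "c' = c(u := t * c u)" for e c'
  proof -
    obtain v w where vw: "e = (v, w)" by force
    then have "v \<noteq> w" using e no_self_loop by blast
    show ?thesis
    proof (cases "v = u")
      case True
      then show ?thesis using vw \<open>v \<noteq> w\<close> unfolding c' by (simp add: diff_divide_distrib left_diff_distrib)
    next
      case False
      then show ?thesis using vw t cu unfolding c' by (cases "w = u") (simp_all add: field_simps)
    qed
  qed
  then have "ratio_sum (c(u := t * c u)) = ratio_sum c
      + ((\<Sum>e\<in>E. (if fst e = u then (t - 1) * (c u / c (snd e)) else 0))
      + (\<Sum>e\<in>E. (if snd e = u then (1 / t - 1) * (c (fst e) / c u) else 0)))"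
    unfolding ratio_sum_def sum.distrib[symmetric] by (intro sum.cong) auto
  also have "(\<Sum>e\<in>E. (if fst e = u then (t - 1) * (c u / c (snd e)) else 0)) = (t - 1) * out_ratio c u"
    unfolding out_ratio_def sum.inter_filter[OF finite_edges] sum_distrib_left by (rule sum.cong) auto
  also have "(\<Sum>e\<in>E. (if snd e = u then (1 / t - 1) * (c (fst e) / c u) else 0)) = (1 / t - 1) * in_ratio c u"
    unfolding in_ratio_def sum.inter_filter[OF finite_edges] sum_distrib_left by (rule sum.cong) auto
  finally show ?thesis by (simp only: add.assoc)
qed

lemma out_ratio_pos:
  assumes pos: "\<And>v. v \<in> V \<Longrightarrow> c v > 0" and u: "u \<in> V - G"
  shows "out_ratio c u > 0"
proof -
  obtain w where uw: "(u, w) \<in> E" using interior_has_out_edge[OF u] by blast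
  show ?thesis unfolding out_ratio_def
    using pos edge_vertices uw u finite_edges
    by (intro sum_pos2[of _ "(u, w)"]) (auto simp: less_imp_le)
qed

lemma in_ratio_pos:
  assumes pos: "\<And>v. v \<in> V \<Longrightarrow> c v > 0" and u: "u \<in> V - G"
  shows "in_ratio c u > 0"
proof -
  obtain v where vu: "(v, u) \<in> E" using interior_has_in_edge[OF u] by blast
  show ?thesis unfolding in_ratio_def
    using pos edge_vertices vu u finite_edges
    by (intro sum_pos2[of _ "(v, u)"]) (auto simp: less_imp_le)
qed

lemma admissible_bounds:
  assumes c: "c \<in> admissible cb" and R: "R \<ge> 1" and F: "ratio_sum c \<le> R"
    and mn: "mn > 0" "\<And>v. v \<in> G \<Longrightarrow> mn \<le> cb v" and Mx: "Mx > 0" "\<And>v. v \<in> G \<Longrightarrow> cb v \<le> Mx"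
    and u: "u \<in> V"
  shows "mn / R ^ card V \<le> c u \<and> c u \<le> R ^ card V * Mx"
proof -
  have pos: "\<And>v. v \<in> V \<Longrightarrow> c v > 0" and cG: "\<And>v. v \<in> G \<Longrightarrow> c v = cb v"
    using c unfolding admissible_def by auto
  have edge: "c v \<le> R * c w" if e: "(v, w) \<in> E" for v w
  proof -
    have "c v / c w \<le> R" using ratio_sum_ge_edge[where c = c, OF pos e] F by simp
    then show ?thesis using pos edge_vertices[OF e] by (simp add: divide_simps mult.commute)
  qed
  show ?thesis
    using bounded_above_if_edge_ratio_bounded[where c = c, OF edge _ R Mx(1) u]
      bounded_below_if_edge_ratio_bounded[where c = c, OF edge pos _ R mn(1) u] cG mn(2) Mx(2) by simp
qed

lemma continuous_on_ratio_sum: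
  assumes "\<And>c v. c \<in> K \<Longrightarrow> v \<in> V \<Longrightarrow> c v \<noteq> 0"
  shows "continuous_on K ratio_sum"
  unfolding ratio_sum_def
proof (intro continuous_on_sum continuous_on_divide ballI)
  fix e :: "'v \<times> 'v"
  show "continuous_on K (\<lambda>c. c (fst e))" "continuous_on K (\<lambda>c. c (snd e))"
    by (rule continuous_on_subset[OF continuous_on_product_coordinates], simp)+
  show "c (snd e) \<noteq> 0" if "c \<in> K" "e \<in> E" for c
    using assms that edge_vertices by blast
qed

text \<open>Compactness: a priori bounds confine competitors with small ratio sum to a box.\<close>

lemma ratio_sum_has_minimiser:
  assumes cb: "\<And>v. v \<in> G \<Longrightarrow> cb v > 0"
  obtains cs where "cs \<in> admissible cb" "\<And>c. c \<in> admissible cb \<Longrightarrow> ratio_sum cs \<le> ratio_sum c"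
proof -
  define b where "b v = (if v \<in> G then cb v else 1)" for v
  define R where "R = max 1 (ratio_sum b)"
  define Mx where "Mx = Max (insert 1 (cb ` G))"
  define mn where "mn = Min (insert 1 (cb ` G))"
  have finG: "finite G" using GV finV finite_subset by blast
  have R: "R \<ge> 1" unfolding R_def by simp
  have Mx: "Mx \<ge> 1" "\<And>v. v \<in> G \<Longrightarrow> cb v \<le> Mx" unfolding Mx_def using finG by simp_all
  have mn: "mn > 0" "mn \<le> 1" "\<And>v. v \<in> G \<Longrightarrow> mn \<le> cb v"
    unfolding mn_def using finG cb by (simp_all add: Min_gr_iff)
  define lo where "lo = mn / R ^ card V"
  define hi where "hi = R ^ card V * Mx"
  have RN: "R ^ card V \<ge> 1" using R by simp
  have lo: "0 < lo" "lo \<le> 1" unfolding lo_def using mn(1,2) RN by (auto simp: divide_le_eq)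
  have hi: "1 \<le> hi" unfolding hi_def using mult_mono[OF RN Mx(1)] RN by simp
  define K where "K = PiE UNIV (\<lambda>v. if v \<in> V - G then {lo..hi} else {b v})"
  have K_iff: "c \<in> K \<longleftrightarrow> (\<forall>v\<in>V - G. lo \<le> c v \<and> c v \<le> hi) \<and> (\<forall>v. v \<notin> V - G \<longrightarrow> c v = b v)" for c
    unfolding K_def by (auto simp: PiE_def Pi_def split: if_splits)
  have K_pos: "c \<in> K \<Longrightarrow> v \<in> V \<Longrightarrow> c v > 0" for c v
    unfolding K_iff b_def using lo cb by (cases "v \<in> G") force+
  have "compact K" unfolding K_def by (intro compact_PiE_UNIV) auto
  moreover have "b \<in> K" unfolding K_iff b_def using lo hi by auto
  ultimately obtain cs where cs: "cs \<in> K" and csmin: "\<And>c. c \<in> K \<Longrightarrow> ratio_sum cs \<le> ratio_sum c"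
    using continuous_attains_inf[OF _ _ continuous_on_ratio_sum] K_pos by (metis empty_iff less_irrefl)
  have "cs \<in> admissible cb"
    using K_pos[OF cs] cs unfolding K_iff admissible_def b_def by auto
  moreover have "ratio_sum cs \<le> ratio_sum c" if c: "c \<in> admissible cb" for c
  proof (cases "ratio_sum c \<le> R")
    case False
    have "ratio_sum cs \<le> ratio_sum b" using csmin \<open>b \<in> K\<close> by blast
    then show ?thesis using False unfolding R_def by simp
  next
    case True
    define c' where "c' v = (if v \<in> V - G then c v else b v)" for v
    have "c' \<in> K"
      using admissible_bounds[OF c R True mn(1,3) _ Mx(2)] Mx(1) unfolding K_iff c'_def lo_def hi_def by auto
    moreover have "ratio_sum c' = ratio_sum c"
      using c edge_vertices unfolding ratio_sum_def c'_def b_def admissible_def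
      by (intro sum.cong) auto
    ultimately show ?thesis using csmin by fastforce
  qed
  ultimately show ?thesis by (rule that)
qed

text \<open>Stationarity under rescaling one interior weight is exactly the balance condition.\<close>

lemma balanced_if_minimiser:
  assumes cs: "cs \<in> admissible cb" and min: "\<And>c. c \<in> admissible cb \<Longrightarrow> ratio_sum cs \<le> ratio_sum c"
  shows "balanced cs"
  unfolding balanced_def
proof
  fix u assume u: "u \<in> V - G"
  have pos: "\<And>v. v \<in> V \<Longrightarrow> cs v > 0" using cs unfolding admissible_def by auto
  show "out_ratio cs u = in_ratio cs u"
  proof (rule eq_if_scaling_minimised_at_1[OF out_ratio_pos[OF pos u] in_ratio_pos[OF pos u]])
    fix t :: real assume t: "t > 0"
    have "cs(u := t * cs u) \<in> admissible cb"
      using cs pos t u unfolding admissible_def by auto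
    then have "ratio_sum cs \<le> ratio_sum (cs(u := t * cs u))" by (rule min)
    then show "0 \<le> (t - 1) * out_ratio cs u + (1 / t - 1) * in_ratio cs u"
      using ratio_sum_rescale[where c = cs and u = u, OF pos _ t] u by simp
  qed
qed

lemma balanced_weights_exist:
  assumes "\<And>v. v \<in> G \<Longrightarrow> cb v > 0"
  obtains c where "c \<in> admissible cb" "balanced c"
proof -
  obtain cs where cs: "cs \<in> admissible cb" and "\<And>c. c \<in> admissible cb \<Longrightarrow> ratio_sum cs \<le> ratio_sum c"
    using ratio_sum_has_minimiser[where cb = cb, OF assms] by blast
  then show ?thesis by (intro that[OF cs] balanced_if_minimiser)
qed

end

section \<open>The minimiser\<close>

lemma Phi_eq_edge_sum: "Phi E x = (\<Sum>e\<in>E. trace (x (fst e) ** matrix_inv (x (snd e))))"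
  unfolding Phi_def by (simp add: case_prod_beta)

locale balanced_weights = dag_with_boundary V E G for V :: "'v set" and E and G +
  fixes c :: "'v \<Rightarrow> real" and z :: "'v \<Rightarrow> real^'n^'n"
  assumes cpos: "\<And>v. v \<in> V \<Longrightarrow> c v > 0"
    and bal: "balanced c"
    and zc: "\<And>v. v \<in> G \<Longrightarrow> z v = c v *\<^sub>R mat 1"
begin

definition m :: "'v \<Rightarrow> real^'n^'n" where
  "m v = (if v \<in> V then c v *\<^sub>R mat 1 else 0)"

definition rescaled :: "('v \<Rightarrow> real^'n^'n) \<Rightarrow> 'v \<Rightarrow> real^'n^'n" where
  "rescaled x v = (1 / c v) *\<^sub>R x v"

lemma m_in_PdV: "m \<in> PdV V G z"
  unfolding PdV_def m_def using cpos zc GV spd_scaleR[OF spd_mat_1] by auto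

lemma edge_ratio_pos: "e \<in> E \<Longrightarrow> c (fst e) / c (snd e) > 0"
  using cpos edge_vertices by simp

lemma Phi_m: "Phi E m = (\<Sum>e\<in>E. c (fst e) / c (snd e) * real CARD('n))"
  unfolding Phi_eq_edge_sum
proof (rule sum.cong[OF refl])
  fix e assume "e \<in> E"
  then have V: "fst e \<in> V" "snd e \<in> V" using edge_vertices by auto
  moreover have "c (snd e) \<noteq> 0" using cpos[OF V(2)] by simp
  ultimately show "trace (m (fst e) ** matrix_inv (m (snd e))) = c (fst e) / c (snd e) * real CARD('n)"
    unfolding m_def by (simp add: matrix_inv_scaleR_mat_1 scaleR_matrix_mul_scaleR trace_scaleR trace_I)
qed

lemma spd_rescaled: "x \<in> PdV V G z \<Longrightarrow> v \<in> V \<Longrightarrow> spd (rescaled x v)"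
  unfolding PdV_def rescaled_def using cpos by (simp add: spd_scaleR)

lemma rescaled_boundary:
  assumes "x \<in> PdV V G z" and v: "v \<in> G"
  shows "rescaled x v = mat 1"
proof -
  have "c v > 0" using cpos GV v by blast
  then show ?thesis using assms zc unfolding PdV_def rescaled_def by simp
qed

lemma trace_edge_rescaled:
  assumes x: "x \<in> PdV V G z" and e: "e \<in> E"
  shows "trace (x (fst e) ** matrix_inv (x (snd e)))
    = c (fst e) / c (snd e) * trace (rescaled x (fst e) ** matrix_inv (rescaled x (snd e)))"
proof -
  have V: "fst e \<in> V" "snd e \<in> V" and c: "c (fst e) > 0" "c (snd e) > 0"
    using e edge_vertices cpos by auto
  have "x v = c v *\<^sub>R rescaled x v" if "c v > 0" for v
    using that unfolding rescaled_def by simp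
  then show ?thesis
    using matrix_inv_scaleR[OF spd_rescaled[OF x V(2)], of "c (snd e)"] c
    by (simp add: scaleR_matrix_mul_scaleR trace_scaleR)
qed

definition defect :: "('v \<Rightarrow> real^'n^'n) \<Rightarrow> 'v \<times> 'v \<Rightarrow> real" where
  "defect x e = (trace (rescaled x (fst e) ** matrix_inv (rescaled x (snd e))) - real CARD('n))
     - (ln (det (rescaled x (fst e))) - ln (det (rescaled x (snd e))))"

lemma defect_nonneg:
  assumes x: "x \<in> PdV V G z" and e: "e \<in> E"
  shows "defect x e \<ge> 0"
proof -
  have V: "fst e \<in> V" "snd e \<in> V" using edge_vertices[OF e] by auto
  show ?thesis
    using ln_det_diff_le_trace[OF spd_rescaled[OF x V(1)] spd_rescaled[OF x V(2)]]
    unfolding defect_def by simp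
qed

lemma eq_if_defect_le_0:
  assumes x: "x \<in> PdV V G z" and e: "(v, w) \<in> E" and "defect x (v, w) \<le> 0"
  shows "rescaled x v = rescaled x w"
proof -
  have V: "v \<in> V" "w \<in> V" using edge_vertices[OF e] by auto
  show ?thesis using assms(3) unfolding defect_def
    by (intro ln_det_diff_eq_trace_imp_eq[OF spd_rescaled[OF x V(1)] spd_rescaled[OF x V(2)]]) simp
qed

text \<open>Balance makes the logarithmic part of the defects telescope away.\<close>

lemma Phi_minus_Phi_m:
  assumes x: "x \<in> PdV V G z"
  shows "Phi E x - Phi E m = (\<Sum>e\<in>E. c (fst e) / c (snd e) * defect x e)"
proof -
  have "(\<Sum>e\<in>E. c (fst e) / c (snd e) *
      (ln (det (rescaled x (fst e))) - ln (det (rescaled x (snd e))))) = 0"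
    using rescaled_boundary[OF x] by (intro balanced_telescoping[OF bal]) simp
  moreover have "Phi E x - Phi E m = (\<Sum>e\<in>E. c (fst e) / c (snd e) *
      (trace (rescaled x (fst e) ** matrix_inv (rescaled x (snd e))) - real CARD('n)))"
    unfolding Phi_m Phi_eq_edge_sum[of E x] sum_subtractf[symmetric]
    by (intro sum.cong refl) (simp add: trace_edge_rescaled[OF x] right_diff_distrib)
  ultimately show ?thesis unfolding defect_def by (simp add: right_diff_distrib sum_subtractf)
qed

lemma Phi_m_le:
  assumes x: "x \<in> PdV V G z"
  shows "Phi E m \<le> Phi E x"
proof -
  have "0 \<le> (\<Sum>e\<in>E. c (fst e) / c (snd e) * defect x e)"
    using edge_ratio_pos defect_nonneg[OF x] by (intro sum_nonneg mult_nonneg_nonneg) (auto simp: less_imp_le)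
  then show ?thesis using Phi_minus_Phi_m[OF x] by simp
qed

lemma eq_m_if_Phi_le:
  assumes x: "x \<in> PdV V G z" and le: "Phi E x \<le> Phi E m"
  shows "x = m"
proof -
  have nn: "c (fst e) / c (snd e) * defect x e \<ge> 0" if "e \<in> E" for e
    using less_imp_le[OF edge_ratio_pos[OF that]] defect_nonneg[OF x that] by (rule mult_nonneg_nonneg)
  have "(\<Sum>e\<in>E. c (fst e) / c (snd e) * defect x e) = 0"
    using Phi_minus_Phi_m[OF x] le Phi_m_le[OF x] by simp
  then have "\<forall>e\<in>E. c (fst e) / c (snd e) * defect x e = 0"
    using nn finite_edges by (simp add: sum_nonneg_eq_0_iff)
  then have "rescaled x v = rescaled x w" if e: "(v, w) \<in> E" for v w
    using eq_if_defect_le_0[OF x e] edge_ratio_pos[OF e] e by fastforce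
  then have resc: "rescaled x v = mat 1" if "v \<in> V" for v
    using edge_invariant_constant[of "rescaled x"] rescaled_boundary[OF x] that by blast
  have "x v = m v" for v
  proof (cases "v \<in> V")
    case True
    have "x v = c v *\<^sub>R rescaled x v" using cpos[OF True] unfolding rescaled_def by simp
    then show ?thesis using resc[OF True] True unfolding m_def by simp
  next
    case False
    then show ?thesis using x unfolding PdV_def m_def by simp
  qed
  then show "x = m" by blast
qed

lemma Phi_m_line:
  assumes Q: "\<And>w. orthogonal_matrix (Q w)"
    and HQ: "\<And>w. H w = Q w ** diag_mat (mu w) ** transpose (Q w)"
    and nz: "\<And>w i. w \<in> V \<Longrightarrow> c w + s * mu w $ i \<noteq> 0"
  shows "Phi E (\<lambda>v. m v + s *\<^sub>R H v) = (\<Sum>e\<in>E. \<Sum>i\<in>UNIV.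
    (c (fst e) + s * (transpose (Q (snd e)) ** H (fst e) ** Q (snd e)) $ i $ i) / (c (snd e) + s * mu (snd e) $ i))"
  unfolding Phi_eq_edge_sum
proof (rule sum.cong[OF refl])
  fix e assume "e \<in> E"
  then have V: "fst e \<in> V" "snd e \<in> V" using edge_vertices by auto
  show "trace ((m (fst e) + s *\<^sub>R H (fst e)) ** matrix_inv (m (snd e) + s *\<^sub>R H (snd e))) = (\<Sum>i\<in>UNIV.
    (c (fst e) + s * (transpose (Q (snd e)) ** H (fst e) ** Q (snd e)) $ i $ i) / (c (snd e) + s * mu (snd e) $ i))"
    using trace_line_mul_inv[OF Q[of "snd e"] nz[OF V(2)], of "c (fst e)" "H (fst e)"] V
    unfolding m_def HQ[of "snd e"] by simp
qed

lemma second_dir_deriv_Phi_m: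
  assumes Q: "\<And>w. orthogonal_matrix (Q w)"
    and HQ: "\<And>w. H w = Q w ** diag_mat (mu w) ** transpose (Q w)"
  shows "second_dir_deriv (Phi E) m H (\<Sum>e\<in>E. \<Sum>i\<in>UNIV. - 2 * mu (snd e) $ i *
    ((transpose (Q (snd e)) ** H (fst e) ** Q (snd e)) $ i $ i * c (snd e) - c (fst e) * mu (snd e) $ i)
      / c (snd e) ^ 3)"
proof -
  obtain del where del: "del > 0" and small: "\<And>w s i. w \<in> V \<Longrightarrow> \<bar>s\<bar> < del \<Longrightarrow> c w + s * mu w $ i > 0"
    using uniform_perturbation_radius[where c = c, OF finV cpos] by blast
  define a where "a e i = (transpose (Q (snd e)) ** H (fst e) ** Q (snd e)) $ i $ i" for e i
  define g' where "g' s = (\<Sum>e\<in>E. \<Sum>i\<in>UNIV.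
      (a e i * c (snd e) - c (fst e) * mu (snd e) $ i) / (c (snd e) + s * mu (snd e) $ i)\<^sup>2)" for s
  have nz: "c (snd e) + s * mu (snd e) $ i \<noteq> 0" if "e \<in> E" "s \<in> ball 0 del" for e s i
    using small[of "snd e" s i] edge_vertices that by (auto simp: dist_norm)
  have "((\<lambda>s. Phi E (\<lambda>v. m v + s *\<^sub>R H v)) has_real_derivative g' s) (at s)"
    if s: "s \<in> ball 0 del" for s
  proof (rule has_field_derivative_transform_within_open[OF _ open_ball s])
    show "((\<lambda>s. \<Sum>e\<in>E. \<Sum>i\<in>UNIV. (c (fst e) + s * a e i) / (c (snd e) + s * mu (snd e) $ i))
        has_real_derivative g' s) (at s)"
      unfolding g'_def using nz s by (intro DERIV_sum has_real_derivative_line_quotient) auto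
    show "(\<Sum>e\<in>E. \<Sum>i\<in>UNIV. (c (fst e) + t * a e i) / (c (snd e) + t * mu (snd e) $ i))
        = Phi E (\<lambda>v. m v + t *\<^sub>R H v)"
      if t: "t \<in> ball 0 del" for t
    proof -
      have "c w + t * mu w $ i \<noteq> 0" if "w \<in> V" for w i
        using small[OF that, of t i] t by (simp add: dist_norm)
      then show ?thesis
        unfolding a_def using Phi_m_line[where Q = Q and mu = mu and H = H and s = t, OF Q HQ] by simp
    qed
  qed
  moreover have "(g' has_real_derivative (\<Sum>e\<in>E. \<Sum>i\<in>UNIV. - 2 * mu (snd e) $ i *
      (a e i * c (snd e) - c (fst e) * mu (snd e) $ i) / c (snd e) ^ 3)) (at 0)"
    unfolding g'_def using cpos edge_vertices
    by (intro DERIV_sum has_real_derivative_inverse_square_line) (auto simp: less_imp_neq[symmetric])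
  ultimately show ?thesis unfolding a_def by (rule second_dir_deriv_intro[OF del])
qed

definition energy :: "('v \<Rightarrow> real^'n^'n) \<Rightarrow> real" where
  "energy H = (\<Sum>e\<in>E. c (fst e) / c (snd e) *
     trace ((rescaled H (fst e) - rescaled H (snd e)) ** (rescaled H (fst e) - rescaled H (snd e))))"

text \<open>Summation by parts again: the telescoping part of each edge term cancels.\<close>

lemma hessian_form_eq_energy:
  assumes H0: "\<forall>v. v \<notin> V - G \<longrightarrow> H v = 0" and Q: "\<And>w. orthogonal_matrix (Q w)"
    and HQ: "\<And>w. H w = Q w ** diag_mat (mu w) ** transpose (Q w)"
  shows "(\<Sum>e\<in>E. \<Sum>i\<in>UNIV. - 2 * mu (snd e) $ i *
    ((transpose (Q (snd e)) ** H (fst e) ** Q (snd e)) $ i $ i * c (snd e) - c (fst e) * mu (snd e) $ i)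
      / c (snd e) ^ 3) = energy H"
proof -
  define phi where "phi u = trace (H u ** H u) / (c u)\<^sup>2" for u
  have "(\<Sum>e\<in>E. \<Sum>i\<in>UNIV. - 2 * mu (snd e) $ i *
    ((transpose (Q (snd e)) ** H (fst e) ** Q (snd e)) $ i $ i * c (snd e) - c (fst e) * mu (snd e) $ i)
      / c (snd e) ^ 3) = (\<Sum>e\<in>E. c (fst e) / c (snd e) *
     trace ((rescaled H (fst e) - rescaled H (snd e)) ** (rescaled H (fst e) - rescaled H (snd e)))
      - c (fst e) / c (snd e) * (phi (fst e) - phi (snd e)))"
  proof (rule sum.cong[OF refl])
    fix e assume "e \<in> E"
    then have "c (fst e) > 0" "c (snd e) > 0" using cpos edge_vertices by auto
    then show "(\<Sum>i\<in>UNIV. - 2 * mu (snd e) $ i *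
        ((transpose (Q (snd e)) ** H (fst e) ** Q (snd e)) $ i $ i * c (snd e) - c (fst e) * mu (snd e) $ i)
          / c (snd e) ^ 3)
      = c (fst e) / c (snd e) *
        trace ((rescaled H (fst e) - rescaled H (snd e)) ** (rescaled H (fst e) - rescaled H (snd e)))
        - c (fst e) / c (snd e) * (phi (fst e) - phi (snd e))"
      unfolding rescaled_def phi_def by (rule hessian_edge_term[OF _ _ Q[of "snd e"] HQ[of "snd e"]])
  qed
  also have "\<dots> = energy H"
    using balanced_telescoping[OF bal, of phi] H0 unfolding phi_def energy_def
    by (simp add: sum_subtractf trace_def)
  finally show ?thesis .
qed

lemma energy_pos:
  assumes symH: "\<And>v. transpose (H v) = H v" and H0: "\<forall>v. v \<notin> V - G \<longrightarrow> H v = 0"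
    and Hn: "H \<noteq> (\<lambda>v. 0)"
  shows "energy H > 0"
proof (rule ccontr)
  define D where "D e = rescaled H (fst e) - rescaled H (snd e)" for e
  have symD: "transpose (D e) = D e" for e
    unfolding D_def rescaled_def by (simp add: transpose_scalar symH transpose_diff)
  have nn: "c (fst e) / c (snd e) * trace (D e ** D e) \<ge> 0" if "e \<in> E" for e
    using less_imp_le[OF edge_ratio_pos[OF that]] trace_square_nonneg[OF symD] by (rule mult_nonneg_nonneg)
  assume "\<not> energy H > 0"
  moreover have "energy H \<ge> 0" unfolding energy_def D_def[symmetric] using nn by (rule sum_nonneg)
  ultimately have "(\<Sum>e\<in>E. c (fst e) / c (snd e) * trace (D e ** D e)) = 0"
    unfolding energy_def D_def by linarith
  then have zero: "\<forall>e\<in>E. c (fst e) / c (snd e) * trace (D e ** D e) = 0"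
    using sum_nonneg_eq_0_iff[OF finite_edges nn] by (simp only:)
  have edge: "rescaled H v = rescaled H w" if e: "(v, w) \<in> E" for v w
  proof -
    have "c v / c w * trace (D (v, w) ** D (v, w)) = 0" using zero e by fastforce
    then have "c v / c w = 0 \<or> trace (D (v, w) ** D (v, w)) = 0" by (simp only: mult_eq_0_iff)
    then have "trace (D (v, w) ** D (v, w)) = 0" using edge_ratio_pos[OF e] by (metis fst_conv snd_conv less_irrefl)
    then have "D (v, w) = 0" by (rule trace_square_eq_0_imp_zero[OF symD])
    then show ?thesis unfolding D_def by simp
  qed
  have boundary: "rescaled H v = 0" if "v \<in> G" for v
    using H0 that unfolding rescaled_def by simp
  have "H v = 0" for v
  proof (cases "v \<in> V")
    case True
    then have "(1 / c v) *\<^sub>R H v = 0"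
      using edge_invariant_constant[OF edge boundary True] unfolding rescaled_def by simp
    then show ?thesis using cpos[OF True] by simp
  qed (use H0 in simp)
  then show False using Hn by auto
qed

lemma hessian_Phi_m_pos:
  assumes Hs: "\<forall>v. symm (H v)" and H0: "\<forall>v. v \<notin> V - G \<longrightarrow> H v = 0" and Hn: "H \<noteq> (\<lambda>v. 0)"
  shows "\<exists>q>0. second_dir_deriv (Phi E) m H q"
proof -
  have symH: "transpose (H v) = H v" for v using Hs unfolding symm_def by blast
  obtain Q mu where Q: "\<And>w. orthogonal_matrix (Q w)"
    and HQ: "\<And>w. H w = Q w ** diag_mat (mu w) ** transpose (Q w)"
    using symmetric_matrix_diagonalization[OF symH] by metis
  show ?thesis
    using second_dir_deriv_Phi_m[where Q = Q and mu = mu and H = H, OF Q HQ]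
      hessian_form_eq_energy[OF H0 Q HQ] energy_pos[OF symH H0 Hn] by auto
qed

end

theorem mainTheorem18:
  fixes V :: "'v set" and E :: "('v \<times> 'v) set" and \<Gamma> :: "'v set"
    and z :: "'v \<Rightarrow> real^'n^'n"
  assumes "finite V" and "E \<subseteq> V \<times> V" and "acyclic E"
    and "\<Gamma> \<subseteq> V" and "sinks V E \<subseteq> \<Gamma>" and "sources V E \<subseteq> \<Gamma>"
    and "V - \<Gamma> \<noteq> {}"
    and "\<forall>v\<in>\<Gamma>. \<exists>c>0. z v = c *\<^sub>R mat 1"
  shows "\<exists>m \<in> PdV V \<Gamma> z.
           (\<forall>x \<in> PdV V \<Gamma> z. Phi E m \<le> Phi E x) \<and>
           (\<forall>x \<in> PdV V \<Gamma> z. Phi E x \<le> Phi E m \<longrightarrow> x = m) \<and>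
           (\<forall>H. (\<forall>v. symm (H v)) \<and> (\<forall>v. v \<notin> V - \<Gamma> \<longrightarrow> H v = 0) \<and> H \<noteq> (\<lambda>v. 0)
                 \<longrightarrow> (\<exists>q>0. second_dir_deriv (Phi E) m H q)) \<and>
           (\<forall>v\<in>V. \<exists>c>0. m v = c *\<^sub>R mat 1)"
proof -
  interpret dag_with_boundary V E \<Gamma>
    using assms by unfold_locales
  obtain cb where cb: "\<forall>v\<in>\<Gamma>. cb v > 0 \<and> z v = cb v *\<^sub>R mat 1"
    using bchoice[OF assms(8)] by blast
  obtain c where c: "c \<in> admissible cb" "balanced c"
    by (rule balanced_weights_exist[of cb]) (use cb in auto)
  interpret balanced_weights V E \<Gamma> c z
    using c cb unfolding admissible_def by unfold_locales auto
  have "\<forall>v\<in>V. \<exists>c'>0. m v = c' *\<^sub>R mat 1" using cpos unfolding m_def by auto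
  then show ?thesis using m_in_PdV Phi_m_le eq_m_if_Phi_le hessian_Phi_m_pos by blast
qed

end
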